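(* Let $p\in(0,1)$, $\gamma>0$, $B>0$, $w\in\mathbb{N}$. Then $\mathcal{T}_N^*$ is a strictly increasing function of $N\in\mathbb{N}$.
   Context: Logarithms are base 2. For an admissible (nonnegative, with sum at most $B$) sequence $(x_j)_{j\ge1}$, $$\mathcal{T}_\infty(x_1,x_2,\dots)=\sum_{k=1}^{w}p^2(1-p)^{k-1}\frac{k}{2}\log_2\!\Big(1+\gamma\frac{B}{k}\Big)+\sum_{j=1}^{\infty}p(1-p)^{j+w-1}\frac12\log_2(1+\gamma x_j)+\sum_{k=1}^{\infty}p^2(1-p)^{k+w-1}\frac{w}{2}\log_2\!\Big(1+\gamma\frac{B-\sum_{j=1}^{k}x_j}{w}\Big).$$ For $N\in\mathbb{N}$ and $\xi_1,\dots,\xi_N\ge0$ with $\sum_{j=1}^N\xi_j\le B$, define $\mathcal{T}_N(\xi_1,\dots,\xi_N)=\mathcal{T}_\infty(\xi_1,\dots,\xi_N,0,0,\dots)$, and let $\mathcal{T}_N^*$ be the supremum of $\mathcal{T}_N$ over this set. *)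

theory Defs
  imports "HOL-Analysis.Analysis"
begin

text \<open>Sequences (x_j)_{j\<ge>1} are represented as functions nat \<Rightarrow> real;
  the value at index 0 is ignored.\<close>

definition T_inf :: "real \<Rightarrow> real \<Rightarrow> real \<Rightarrow> nat \<Rightarrow> (nat \<Rightarrow> real) \<Rightarrow> real" where
  "T_inf p \<gamma> B w x =
     (\<Sum>k=1..w. p^2 * (1-p)^(k-1) * (real k / 2) * log 2 (1 + \<gamma> * B / real k))
   + (\<Sum>i. (let j = Suc i in p * (1-p)^(j+w-1) * (1/2) * log 2 (1 + \<gamma> * x j)))
   + (\<Sum>i. (let k = Suc i in p^2 * (1-p)^(k+w-1) * (real w / 2) *
           log 2 (1 + \<gamma> * (B - (\<Sum>j=1..k. x j)) / real w)))"

definition T_N :: "real \<Rightarrow> real \<Rightarrow> real \<Rightarrow> nat \<Rightarrow> nat \<Rightarrow> (nat \<Rightarrow> real) \<Rightarrow> real" where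
  "T_N p \<gamma> B w N \<xi> = T_inf p \<gamma> B w (\<lambda>j. if 1 \<le> j \<and> j \<le> N then \<xi> j else 0)"

definition feasible_N :: "real \<Rightarrow> nat \<Rightarrow> (nat \<Rightarrow> real) set" where
  "feasible_N B N = {\<xi>. (\<forall>j\<in>{1..N}. 0 \<le> \<xi> j) \<and> (\<Sum>j=1..N. \<xi> j) \<le> B}"

definition T_N_star :: "real \<Rightarrow> real \<Rightarrow> real \<Rightarrow> nat \<Rightarrow> nat \<Rightarrow> real" where
  "T_N_star p \<gamma> B w N = (SUP \<xi>\<in>feasible_N B N. T_N p \<gamma> B w N \<xi>)"

end

theory Submission
  imports Defs
begin

(* The supremum defining T_N^* is attained: once the geometric tail of the last series is summed,
   T_N is a continuous function of (xi_1, ..., xi_N) on a compact set. A maximiser for N is then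
   beaten by an allocation for N + 1. If the budget is not exhausted, a small part t of the slack D
   goes to the new slot N + 1: its term log(1 + gamma t) grows at slope at least
   gamma / (1 + gamma t), while the residual term w log(1 + gamma s / w) loses at slope at most
   gamma / (1 + gamma (D - t) / w), which is smaller as soon as t (1 + w) < D. If the budget is
   exhausted, half of the last positive coordinate is moved to slot N + 1; strict subadditivity of
   log(1 + gamma s) and Bernoulli's inequality (1 + u / w)^w >= 1 + u make this a strict gain. *)

lemma log_add_one_le_nat_mult_log:
  fixes b u :: real and n :: nat
  assumes "1 < b" "0 \<le> u" "0 < n"
  shows "log b (1 + u) \<le> n * log b (1 + u / n)"
proof -
  have "-1 \<le> u / n"
    using assms by (simp add: order_trans[of _ 0])
  then have "1 + u \<le> (1 + u / n) ^ n"
    using Bernoulli_inequality[of "u / n" n] assms by simp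
  then have "log b (1 + u) \<le> log b ((1 + u / n) ^ n)"
    using assms by simp
  also have "\<dots> = n * log b (1 + u / n)"
    using assms by (simp add: log_nat_power)
  finally show ?thesis .
qed

lemma log_add_one_strict_subadditive:
  fixes b u v :: real
  assumes "1 < b" "0 < u" "0 < v"
  shows "log b (1 + (u + v)) < log b (1 + u) + log b (1 + v)"
proof -
  have "1 + (u + v) < (1 + u) * (1 + v)"
    using assms by (simp add: algebra_simps)
  then have "log b (1 + (u + v)) < log b ((1 + u) * (1 + v))"
    using assms by (intro log_less) auto
  also have "\<dots> = log b (1 + u) + log b (1 + v)"
    using assms by (intro log_mult_pos) auto
  finally show ?thesis .
qed

lemma mult_log_add_one_lt_split:
  fixes b c w D t :: real
  assumes "1 < b" "0 < c" "0 < w" "0 < t" "t * (1 + w) < D"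
  shows "w * log b (1 + c * D / w) < log b (1 + c * t) + w * log b (1 + c * (D - t) / w)"
proof -
  define u v where "u = 1 + c * D / w" and "v = 1 + c * (D - t) / w"
  have "c * (t * (1 + w)) < c * D"
    using assms by (intro mult_strict_left_mono)
  then have "c * t * w < c * (D - t)"
    by (simp add: algebra_simps)
  then have ct_v: "1 + c * t < v"
    unfolding v_def using assms by (simp add: field_simps)
  moreover have ct_pos: "0 < c * t"
    using assms by simp
  ultimately have v_pos: "0 < v"
    by linarith
  have u_v: "u - v = c * t / w"
    unfolding u_def v_def using assms by (simp add: field_simps)
  moreover have "0 < c * t / w"
    using assms by simp
  ultimately have u_pos: "0 < u"
    using v_pos by linarith
  have "ln u - ln v \<le> c * t / w / v"
    using ln_diff_le[OF u_pos v_pos] u_v by simp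
  then have "w * (ln u - ln v) \<le> w * (c * t / w / v)"
    using assms by (intro mult_left_mono) auto
  also have "\<dots> = c * t / v"
    using assms by simp
  also have "\<dots> < c * t / (1 + c * t)"
    using ct_pos ct_v v_pos by (intro divide_strict_left_mono) auto
  also have "\<dots> \<le> ln (1 + c * t)"
    using ln_add1_ge[of "c * t"] assms by (simp add: add.commute)
  finally have "w * ln u / ln b < (ln (1 + c * t) + w * ln v) / ln b"
    using assms by (intro divide_strict_right_mono) (auto simp: algebra_simps)
  then show ?thesis
    by (simp add: log_def u_def v_def add_divide_distrib)
qed

lemma last_nonzero_summand:
  fixes x :: "nat \<Rightarrow> 'a::comm_monoid_add"
  assumes "(\<Sum>i=1..n. x i) \<noteq> 0"
  obtains j where "j \<in> {1..n}" "x j \<noteq> 0" "\<And>i. j < i \<Longrightarrow> i \<le> n \<Longrightarrow> x i = 0"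
proof -
  define J where "J = {j \<in> {1..n}. x j \<noteq> 0}"
  have "finite J"
    by (simp add: J_def)
  moreover have "J \<noteq> {}"
  proof
    assume "J = {}"
    then have "\<forall>i\<in>{1..n}. x i = 0"
      by (auto simp: J_def)
    then show False
      using assms by simp
  qed
  ultimately obtain j where j: "j \<in> J" and j_max: "\<And>i. i \<in> J \<Longrightarrow> i \<le> j"
    using Max_in Max_ge by blast
  have "x i = 0" if "j < i" "i \<le> n" for i
    using j j_max[of i] that by (force simp: J_def)
  with j show ?thesis
    by (intro that) (auto simp: J_def)
qed

locale T_params =
  fixes p \<gamma> B :: real and w :: nat
  assumes p_pos: "0 < p" and p_lt_1: "p < 1" and \<gamma>_pos: "0 < \<gamma>" and B_pos: "0 < B"
    and w_pos: "0 < w"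
begin

definition \<alpha> :: "nat \<Rightarrow> real" where
  "\<alpha> k = p * (1 - p) ^ (k + w - 1)"

definition \<beta> :: "nat \<Rightarrow> real" where
  "\<beta> k = p\<^sup>2 * (1 - p) ^ (k + w - 1)"

definition T_head :: real where
  "T_head = (\<Sum>k=1..w. p\<^sup>2 * (1 - p) ^ (k - 1) * (real k / 2) * log 2 (1 + \<gamma> * B / real k))"

definition rate :: "real \<Rightarrow> real" where
  "rate x = log 2 (1 + \<gamma> * x)"

definition residual :: "real \<Rightarrow> real" where
  "residual s = real w / 2 * log 2 (1 + \<gamma> * (B - s) / real w)"

definition psum :: "(nat \<Rightarrow> real) \<Rightarrow> nat \<Rightarrow> real" where
  "psum x k = (\<Sum>j=1..k. x j)"

definition truncate :: "nat \<Rightarrow> (nat \<Rightarrow> real) \<Rightarrow> nat \<Rightarrow> real" where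
  "truncate N x j = (if 1 \<le> j \<and> j \<le> N then x j else 0)"

(* T_N in closed form: beyond slot N the residual argument stays at psum x N, and the geometric
   tail of the beta-weights sums to alpha (N + 1). *)
definition T_closed :: "nat \<Rightarrow> (nat \<Rightarrow> real) \<Rightarrow> real" where
  "T_closed N x = T_head + (\<Sum>j=1..N. \<alpha> j / 2 * rate (x j))
     + (\<Sum>k=1..N. \<beta> k * residual (psum x k)) + \<alpha> (Suc N) * residual (psum x N)"

lemma \<alpha>_pos: "0 < \<alpha> k"
  unfolding \<alpha>_def using p_pos p_lt_1 by simp

lemma \<beta>_eq_diff: "\<beta> k = \<alpha> k - \<alpha> (Suc k)"
proof -
  obtain m where "k + w = Suc m"
    using w_pos by (cases "k + w") auto
  then show ?thesis
    by (simp add: \<alpha>_def \<beta>_def power2_eq_square algebra_simps)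
qed

lemma sum_\<beta>: "j \<le> Suc N \<Longrightarrow> (\<Sum>k=j..N. \<beta> k) = \<alpha> j - \<alpha> (Suc N)"
  using sum_Suc_diff[of j N \<alpha>] by (simp add: \<beta>_eq_diff sum_subtractf)

lemma \<beta>_tail_sums: "(\<lambda>i. \<beta> (Suc (i + N))) sums \<alpha> (Suc N)"
proof -
  have "(\<lambda>i. p\<^sup>2 * (1 - p) ^ (N + w) * (1 - p) ^ i) sums (p\<^sup>2 * (1 - p) ^ (N + w) * (1 / (1 - (1 - p))))"
    by (rule sums_mult, rule geometric_sums) (use p_pos p_lt_1 in auto)
  moreover have "p\<^sup>2 * (1 - p) ^ (N + w) * (1 / (1 - (1 - p))) = \<alpha> (Suc N)"
    using p_pos by (simp add: \<alpha>_def power2_eq_square)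
  ultimately show ?thesis
    by (simp add: \<beta>_def power_add algebra_simps)
qed

lemma \<alpha>_antimono: "j \<le> k \<Longrightarrow> \<alpha> k \<le> \<alpha> j"
  unfolding \<alpha>_def using p_pos p_lt_1 by (intro mult_left_mono power_decreasing) auto

lemma residual_B: "residual B = 0"
  by (simp add: residual_def)

lemma psum_truncate: "psum (truncate N x) k = psum x (min k N)"
proof -
  have "{1..k} \<inter> {j. 1 \<le> j \<and> j \<le> N} = {1..min k N}"
    by auto
  then show ?thesis
    using sum.inter_restrict[of "{1..k}" x "{j. 1 \<le> j \<and> j \<le> N}"]
    by (simp add: psum_def truncate_def)
qed

lemma T_N_eq_T_closed: "T_N p \<gamma> B w N x = T_closed N x"
proof -
  define y where "y = truncate N x"
  define r where "r i = \<alpha> (Suc i) / 2 * rate (y (Suc i))" for i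
  define f where "f i = \<beta> (Suc i) * residual (psum y (Suc i))" for i
  have T_N_series: "T_N p \<gamma> B w N x = T_head + suminf r + suminf f"
    unfolding T_N_def T_inf_def T_head_def r_def f_def y_def truncate_def[abs_def]
    by (simp add: \<alpha>_def \<beta>_def rate_def residual_def psum_def Let_def mult.assoc)
  have "suminf r = (\<Sum>i<N. r i)"
    by (rule suminf_finite) (auto simp: r_def y_def truncate_def rate_def)
  also have "\<dots> = (\<Sum>j=1..N. \<alpha> j / 2 * rate (x j))"
    unfolding r_def y_def truncate_def by (subst sum_bounds_lt_plus1[symmetric]) simp
  finally have r_sum: "suminf r = (\<Sum>j=1..N. \<alpha> j / 2 * rate (x j))" .
  have f_eq: "f i = \<beta> (Suc i) * residual (psum x (min (Suc i) N))" for i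
    by (simp add: f_def y_def psum_truncate)
  have "(\<lambda>i. f (i + N)) sums (\<alpha> (Suc N) * residual (psum x N))"
    using sums_mult2[OF \<beta>_tail_sums] by (simp add: f_eq)
  then have "f sums (\<alpha> (Suc N) * residual (psum x N) + (\<Sum>i<N. f i))"
    by (simp add: sums_iff_shift)
  moreover have "(\<Sum>i<N. f i) = (\<Sum>k=1..N. \<beta> k * residual (psum x k))"
    by (subst sum_bounds_lt_plus1[symmetric]) (simp add: f_eq)
  ultimately have f_sum: "suminf f = (\<Sum>k=1..N. \<beta> k * residual (psum x k)) + \<alpha> (Suc N) * residual (psum x N)"
    by (simp add: sums_iff)
  show ?thesis
    unfolding T_N_series r_sum f_sum T_closed_def by simp
qed

lemma T_closed_cong:
  assumes "\<And>j. 1 \<le> j \<Longrightarrow> j \<le> N \<Longrightarrow> x j = y j"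
  shows "T_closed N x = T_closed N y"
proof -
  have "psum x k = psum y k" if "k \<le> N" for k
    unfolding psum_def using that assms by (intro sum.cong) auto
  then show ?thesis
    unfolding T_closed_def using assms by (intro arg_cong2[where f = "(+)"] sum.cong) auto
qed

lemma psum_update:
  assumes "1 \<le> j"
  shows "psum (x(j := v)) k = psum x k + (if j \<le> k then v - x j else 0)"
proof -
  have "psum (x(j := v)) k = (\<Sum>i=1..k. x i + (if i = j then v - x j else 0))"
    unfolding psum_def by (intro sum.cong) auto
  then show ?thesis
    using assms by (simp add: sum.distrib psum_def)
qed

lemma T_closed_extend:
  "T_closed (Suc N) (x(Suc N := t)) =
     T_closed N x + \<alpha> (Suc N) * (rate t / 2 + residual (psum x N + t) - residual (psum x N))"
proof -
  define y where "y = x(Suc N := t)"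
  have psum_y: "psum y k = psum x k" if "k \<le> N" for k
    unfolding psum_def y_def using that by (intro sum.cong) auto
  have "psum y (Suc N) = psum x N + t"
    using psum_y[of N] by (simp add: psum_def y_def)
  moreover have "(\<Sum>j=1..N. \<alpha> j / 2 * rate (y j)) = (\<Sum>j=1..N. \<alpha> j / 2 * rate (x j))"
    by (intro sum.cong) (auto simp: y_def)
  moreover have "(\<Sum>k=1..N. \<beta> k * residual (psum y k)) = (\<Sum>k=1..N. \<beta> k * residual (psum x k))"
    by (intro sum.cong) (auto simp: psum_y)
  ultimately show ?thesis
    unfolding y_def[symmetric] T_closed_def
    by (simp add: psum_y \<beta>_eq_diff[of "Suc N"] y_def algebra_simps)
qed

lemma psum_mono_nonneg:
  assumes "\<And>j. 1 \<le> j \<Longrightarrow> j \<le> n \<Longrightarrow> 0 \<le> x j" "k \<le> n"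
  shows "psum x k \<le> psum x n"
  unfolding psum_def using assms by (intro sum_mono2) auto

lemma continuous_on_T_closed: "continuous_on (feasible_N B N) (T_closed N)"
proof -
  have coord: "continuous_on (feasible_N B N) (\<lambda>x. x i)" for i
    by (rule continuous_on_subset[OF continuous_on_product_coordinates]) simp
  have rate_arg: "0 < 1 + \<gamma> * x j" if "x \<in> feasible_N B N" "j \<in> {1..N}" for x j
    using that \<gamma>_pos by (simp add: feasible_N_def add_pos_nonneg)
  have residual_arg: "0 < 1 + \<gamma> * (B - psum x k) / real w"
    if "x \<in> feasible_N B N" "k \<le> N" for x k
  proof -
    have "psum x k \<le> psum x N"
      using that by (intro psum_mono_nonneg) (auto simp: feasible_N_def)
    also have "\<dots> \<le> B"
      using that by (simp add: feasible_N_def psum_def)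
    finally show ?thesis
      using \<gamma>_pos w_pos by (simp add: add_pos_nonneg)
  qed
  have psum_cont: "continuous_on (feasible_N B N) (\<lambda>x. psum x k)" for k
    unfolding psum_def by (intro continuous_intros coord)
  have rate_cont: "continuous_on (feasible_N B N) (\<lambda>x. rate (x j))" if "j \<in> {1..N}" for j
    unfolding rate_def
    by (rule continuous_on_log) (auto intro!: continuous_intros coord dest!: rate_arg[OF _ that])
  have residual_cont: "continuous_on (feasible_N B N) (\<lambda>x. residual (psum x k))" if "k \<le> N" for k
    unfolding residual_def
    by (intro continuous_on_mult continuous_on_const continuous_on_log)
      (use w_pos in \<open>auto intro!: continuous_intros psum_cont dest!: residual_arg[OF _ that]\<close>)
  show ?thesis
    unfolding T_closed_def
    by (intro continuous_on_add continuous_on_const continuous_on_sum continuous_on_mult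
        rate_cont residual_cont) auto
qed

(* feasible_N B N leaves the coordinates outside {1..N} unconstrained, so it is not compact;
   the maximum is taken on this compact set of truncated allocations instead. *)
definition feasible_box :: "nat \<Rightarrow> (nat \<Rightarrow> real) set" where
  "feasible_box N = PiE UNIV (\<lambda>j. if j \<in> {1..N} then {0..B} else {0}) \<inter> {x. psum x N \<le> B}"

lemma compact_feasible_box: "compact (feasible_box N)"
proof -
  have "compact (PiE UNIV (\<lambda>j. if j \<in> {1..N} then {0..B} else {0::real}))"
    using compactin_PiE[of "\<lambda>_. euclidean" UNIV "\<lambda>j. if j \<in> {1..N} then {0..B} else {0::real}"]
    by (simp add: euclidean_product_topology)
  moreover have "closed {x :: nat \<Rightarrow> real. psum x N \<le> B}"
    unfolding psum_def by (intro closed_Collect_le continuous_intros) auto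
  ultimately show ?thesis
    unfolding feasible_box_def by (rule compact_Int_closed)
qed

lemma feasible_box_subset: "feasible_box N \<subseteq> feasible_N B N"
proof
  fix x assume x: "x \<in> feasible_box N"
  have "x j \<in> {0..B}" if "j \<in> {1..N}" for j
    using x that by (auto simp: feasible_box_def PiE_iff dest: spec[of _ j])
  with x show "x \<in> feasible_N B N"
    by (simp add: feasible_box_def feasible_N_def psum_def)
qed

lemma truncate_in_feasible_box:
  assumes "x \<in> feasible_N B N"
  shows "truncate N x \<in> feasible_box N"
proof -
  have x_le_B: "x j \<le> B" if "j \<in> {1..N}" for j
  proof -
    have "x j \<le> (\<Sum>i=1..N. x i)"
      using assms that by (intro member_le_sum) (auto simp: feasible_N_def)
    then show ?thesis
      using assms by (simp add: feasible_N_def)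
  qed
  show ?thesis
    using assms x_le_B
    by (auto simp: feasible_box_def feasible_N_def PiE_iff psum_truncate truncate_def psum_def)
qed

lemma T_closed_truncate: "T_closed N (truncate N x) = T_closed N x"
  by (rule T_closed_cong) (simp add: truncate_def)

lemma T_closed_attains_max: "\<exists>x\<in>feasible_N B N. \<forall>y\<in>feasible_N B N. T_closed N y \<le> T_closed N x"
proof -
  have "(\<lambda>_. 0) \<in> feasible_N B N"
    using B_pos by (simp add: feasible_N_def)
  then have "feasible_box N \<noteq> {}"
    using truncate_in_feasible_box by blast
  then obtain x where x: "x \<in> feasible_box N" "\<forall>y\<in>feasible_box N. T_closed N y \<le> T_closed N x"
    using continuous_attains_sup[OF compact_feasible_box _
        continuous_on_subset[OF continuous_on_T_closed feasible_box_subset]]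
    by blast
  have "T_closed N y \<le> T_closed N x" if "y \<in> feasible_N B N" for y
    using x(2) truncate_in_feasible_box[OF that] T_closed_truncate by metis
  then show ?thesis
    using x(1) feasible_box_subset by blast
qed

lemma T_N_star_eq_max:
  assumes "x \<in> feasible_N B N" "\<And>y. y \<in> feasible_N B N \<Longrightarrow> T_closed N y \<le> T_closed N x"
  shows "T_N_star p \<gamma> B w N = T_closed N x"
  unfolding T_N_star_def T_N_eq_T_closed using assms by (intro cSup_eq_maximum) auto

lemma T_closed_improve_slack:
  assumes x: "x \<in> feasible_N B N" and slack: "psum x N < B"
  obtains y where "y \<in> feasible_N B (Suc N)" "T_closed N x < T_closed (Suc N) y"
proof
  define D where "D = B - psum x N"
  define t where "t = D / (2 * (1 + real w))"
  have D_pos: "0 < D" and t_pos: "0 < t"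
    using slack by (auto simp: D_def t_def)
  have "t * (1 + real w) = D / 2"
    by (simp add: t_def field_simps)
  then have t_small: "t * (1 + real w) < D"
    using D_pos by linarith
  have "t \<le> t * (1 + real w)"
    using t_pos by simp
  then have "t < D"
    using t_small by linarith
  show "x(Suc N := t) \<in> feasible_N B (Suc N)"
    using x t_pos \<open>t < D\<close> by (auto simp: feasible_N_def D_def psum_def)
  have "real w * log 2 (1 + \<gamma> * D / real w) < log 2 (1 + \<gamma> * t) + real w * log 2 (1 + \<gamma> * (D - t) / real w)"
    using \<gamma>_pos w_pos t_pos t_small by (intro mult_log_add_one_lt_split) auto
  moreover have "residual (psum x N + t) = real w / 2 * log 2 (1 + \<gamma> * (D - t) / real w)"
    and "residual (psum x N) = real w / 2 * log 2 (1 + \<gamma> * D / real w)"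
    by (simp_all add: residual_def D_def algebra_simps)
  ultimately have "0 < rate t / 2 + residual (psum x N + t) - residual (psum x N)"
    by (simp add: rate_def field_simps)
  then show "T_closed N x < T_closed (Suc N) (x(Suc N := t))"
    using \<alpha>_pos by (simp add: T_closed_extend)
qed

lemma T_closed_shrink_last:
  assumes j: "j \<in> {1..N}" and tail: "\<And>i. j < i \<Longrightarrow> i \<le> N \<Longrightarrow> x i = 0"
    and full: "psum x N = B"
  shows "T_closed N (x(j := x j - t)) =
    T_closed N x + \<alpha> j * ((rate (x j - t) - rate (x j)) / 2 + residual (B - t))"
proof -
  define y where "y = x(j := x j - t)"
  have psum_x: "psum x k = B" if "j \<le> k" "k \<le> N" for k
  proof -
    have "sum x ({1..N} - {1..k}) = psum x N - psum x k"
      unfolding psum_def using that by (intro sum_diff) auto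
    moreover have "sum x ({1..N} - {1..k}) = 0"
      using that tail by (intro sum.neutral) auto
    ultimately show ?thesis
      using full by simp
  qed
  have psum_y: "psum y k = psum x k - (if j \<le> k then t else 0)" for k
    using j by (simp add: y_def psum_update)
  have rate_term: "\<alpha> i / 2 * rate (y i) =
      \<alpha> i / 2 * rate (x i) + (if i = j then \<alpha> j / 2 * (rate (x j - t) - rate (x j)) else 0)" for i
    by (simp add: y_def algebra_simps)
  have residual_term: "\<beta> k * residual (psum y k) =
      \<beta> k * residual (psum x k) + (if j \<le> k then \<beta> k * residual (B - t) else 0)"
    if "k \<le> N" for k
    using that by (simp add: psum_y psum_x residual_B)
  have "{k \<in> {1..N}. j \<le> k} = {j..N}"
    using j by auto
  then have "(\<Sum>k=1..N. if j \<le> k then \<beta> k * residual (B - t) else 0) = (\<Sum>k=j..N. \<beta> k) * residual (B - t)"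
    by (simp add: sum.inter_filter[symmetric] sum_distrib_right)
  also have "\<dots> = (\<alpha> j - \<alpha> (Suc N)) * residual (B - t)"
    using j by (simp add: sum_\<beta>)
  finally have residual_sum: "(\<Sum>k=1..N. if j \<le> k then \<beta> k * residual (B - t) else 0) =
      (\<alpha> j - \<alpha> (Suc N)) * residual (B - t)" .
  have rate_sum: "(\<Sum>i=1..N. \<alpha> i / 2 * rate (y i)) =
      (\<Sum>i=1..N. \<alpha> i / 2 * rate (x i)) + \<alpha> j / 2 * (rate (x j - t) - rate (x j))"
    using j by (simp only: rate_term sum.distrib) simp
  have "(\<Sum>k=1..N. \<beta> k * residual (psum y k)) =
      (\<Sum>k=1..N. \<beta> k * residual (psum x k) + (if j \<le> k then \<beta> k * residual (B - t) else 0))"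
    by (rule sum.cong) (simp_all add: residual_term)
  then have residual_sum': "(\<Sum>k=1..N. \<beta> k * residual (psum y k)) =
      (\<Sum>k=1..N. \<beta> k * residual (psum x k)) + (\<alpha> j - \<alpha> (Suc N)) * residual (B - t)"
    by (simp only: sum.distrib residual_sum)
  have psum_y_N: "psum y N = B - t"
    using j full by (simp add: psum_y)
  show ?thesis
    unfolding y_def[symmetric] T_closed_def rate_sum residual_sum' psum_y_N full residual_B
    by (simp add: field_simps)
qed

lemma T_closed_improve_full:
  assumes x: "x \<in> feasible_N B N" and full: "psum x N = B"
  obtains y where "y \<in> feasible_N B (Suc N)" "T_closed N x < T_closed (Suc N) y"
proof -
  have x_nonneg: "\<And>i. i \<in> {1..N} \<Longrightarrow> 0 \<le> x i"
    using x by (simp add: feasible_N_def)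
  have "(\<Sum>i=1..N. x i) \<noteq> 0"
    using full B_pos by (simp add: psum_def)
  then obtain j where j: "j \<in> {1..N}" "x j \<noteq> 0" and tail: "\<And>i. j < i \<Longrightarrow> i \<le> N \<Longrightarrow> x i = 0"
    using last_nonzero_summand by blast
  define t where "t = x j / 2"
  define x' where "x' = x(j := x j - t)"
  have t_pos: "0 < t"
    using x_nonneg[OF j(1)] j(2) by (simp add: t_def)
  have psum_x': "psum x' N = B - t"
    using j full by (simp add: x'_def psum_update)
  have shrink: "T_closed N x' =
      T_closed N x + \<alpha> j * ((rate (x j - t) - rate (x j)) / 2 + residual (B - t))"
    unfolding x'_def by (rule T_closed_shrink_last[OF j(1) tail full])
  have feasible: "x'(Suc N := t) \<in> feasible_N B (Suc N)"
    using x_nonneg t_pos psum_x' by (auto simp: feasible_N_def x'_def t_def psum_def)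
  have "rate (x j) < rate (x j - t) + rate t"
    using log_add_one_strict_subadditive[of 2 "\<gamma> * (x j - t)" "\<gamma> * t"] \<gamma>_pos t_pos
    by (simp add: rate_def t_def algebra_simps)
  then have gain_j: "0 < \<alpha> j / 2 * (rate (x j - t) - rate (x j) + rate t)"
    using \<alpha>_pos by simp
  have "rate t / 2 \<le> residual (B - t)"
    using log_add_one_le_nat_mult_log[of 2 "\<gamma> * t" w] \<gamma>_pos t_pos w_pos
    by (simp add: rate_def residual_def)
  moreover have "\<alpha> (Suc N) \<le> \<alpha> j"
    using j by (intro \<alpha>_antimono) auto
  ultimately have gain_tail: "0 \<le> (\<alpha> j - \<alpha> (Suc N)) * (residual (B - t) - rate t / 2)"
    by simp
  have "T_closed (Suc N) (x'(Suc N := t)) =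
      T_closed N x + \<alpha> j / 2 * (rate (x j - t) - rate (x j) + rate t)
        + (\<alpha> j - \<alpha> (Suc N)) * (residual (B - t) - rate t / 2)"
    unfolding T_closed_extend psum_x' shrink
    by (simp add: residual_B field_simps)
  then have "T_closed N x < T_closed (Suc N) (x'(Suc N := t))"
    using gain_j gain_tail by linarith
  with feasible show ?thesis
    by (rule that)
qed

lemma T_closed_improve:
  assumes "x \<in> feasible_N B N"
  obtains y where "y \<in> feasible_N B (Suc N)" "T_closed N x < T_closed (Suc N) y"
proof (cases "psum x N < B")
  case True
  then show ?thesis
    using T_closed_improve_slack[OF assms] that by blast
next
  case False
  then have "psum x N = B"
    using assms by (simp add: feasible_N_def psum_def)
  then show ?thesis
    using T_closed_improve_full[OF assms] that by blast
qed

lemma T_N_star_less_Suc: "T_N_star p \<gamma> B w N < T_N_star p \<gamma> B w (Suc N)"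
proof -
  obtain x where x: "x \<in> feasible_N B N" "\<forall>y\<in>feasible_N B N. T_closed N y \<le> T_closed N x"
    using T_closed_attains_max by blast
  obtain y where y: "y \<in> feasible_N B (Suc N)" "T_closed N x < T_closed (Suc N) y"
    using T_closed_improve[OF x(1)] by blast
  obtain z where z: "z \<in> feasible_N B (Suc N)"
    "\<forall>y\<in>feasible_N B (Suc N). T_closed (Suc N) y \<le> T_closed (Suc N) z"
    using T_closed_attains_max by blast
  have "T_N_star p \<gamma> B w N = T_closed N x"
    using x by (intro T_N_star_eq_max) auto
  also have "\<dots> < T_closed (Suc N) y"
    by (fact y(2))
  also have "\<dots> \<le> T_closed (Suc N) z"
    using y(1) z(2) by blast
  also have "\<dots> = T_N_star p \<gamma> B w (Suc N)"
    using z by (intro T_N_star_eq_max[symmetric]) auto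
  finally show ?thesis .
qed

end

theorem corollary2:
  fixes p \<gamma> B :: real and w :: nat
  assumes "0 < p" "p < 1" "0 < \<gamma>" "0 < B" "1 \<le> w"
  shows "strict_mono_on {1..} (T_N_star p \<gamma> B w)"
proof -
  interpret T_params p \<gamma> B w
    using assms by unfold_locales auto
  have "strict_mono (T_N_star p \<gamma> B w)"
    by (simp add: strict_mono_Suc_iff T_N_star_less_Suc)
  then show ?thesis
    by (rule monotone_on_subset) simp
qed

end
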